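(* Let $K\ge 1$ and $N_1,\ldots,N_K\ge 1$ be integers, let $T\ge 1$, and let $\Delta_N=\{\boldsymbol u\in\mathbb R_+^N:\sum_{i=1}^N u_i=1\}$. Let $\ell_t:\Delta_{N_1}\times\cdots\times\Delta_{N_K}\to\mathbb R$, $t\ge 1$, be differentiable and jointly convex loss functions. Assume that for every $k\in\{1,\ldots,K\}$ there is $G^{(k)}>0$ with $$\max_{1\le t\le T}\ \sup_{\boldsymbol u^{(1)},\ldots,\boldsymbol u^{(K)}}\ \max_{1\le i\le N_k}\Big|\partial_{u^{(k)}_i}\ell_t\big(\boldsymbol u^{(1)},\ldots,\boldsymbol u^{(K)}\big)\Big|\le G^{(k)}.$$ Then the Multi-variable Exponentiated Gradient algorithm (described in the context) run with $\eta^{(k)}=\sqrt{2\log(N_k)/T}\,/G^{(k)}$ for $k=1,\ldots,K$ satisfies $$\sum_{t=1}^T \ell_t\big(\hat{\boldsymbol u}^{(1)}_t,\ldots,\hat{\boldsymbol u}^{(K)}_t\big)-\min_{(\boldsymbol u^{(1)},\ldots,\boldsymbol u^{(K)})\in\Delta_{N_1}\times\cdots\times\Delta_{N_K}}\sum_{t=1}^T\ell_t\big(\boldsymbol u^{(1)},\ldots,\boldsymbol u^{(K)}\big)\le\sqrt{2T}\sum_{k=1}^K G^{(k)}\sqrt{\log N_k}.$$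
   Context: Multi-variable Exponentiated Gradient algorithm with parameters $\eta^{(1)},\ldots,\eta^{(K)}>0$ (the losses may be chosen adversarially, $\ell_t$ being revealed after the output of round $t$): initialize $\hat{\boldsymbol u}^{(k)}_1=(1/N_k,\ldots,1/N_k)\in\Delta_{N_k}$ for all $k$. At each round $t=1,2,\ldots$, output $(\hat{\boldsymbol u}^{(1)}_t,\ldots,\hat{\boldsymbol u}^{(K)}_t)$, observe $\ell_t$, and set for each $k$ and $i\in\{1,\ldots,N_k\}$ $$\hat u^{(k)}_{t+1,i}=\frac{\exp\big(-\eta^{(k)}\sum_{s=1}^t\partial_{u^{(k)}_i}\ell_s(\hat{\boldsymbol u}^{(1)}_s,\ldots,\hat{\boldsymbol u}^{(K)}_s)\big)}{\sum_{i'=1}^{N_k}\exp\big(-\eta^{(k)}\sum_{s=1}^t\partial_{u^{(k)}_{i'}}\ell_s(\hat{\boldsymbol u}^{(1)}_s,\ldots,\hat{\boldsymbol u}^{(K)}_s)\big)},$$ where $\partial_{u^{(k)}_i}\ell_s$ is the partial derivative of $\ell_s$ with respect to the $i$-th coordinate of the $k$-th block variable. *)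

theory Defs
  imports "HOL-Analysis.Analysis"
begin

text \<open>Coordinates of the product space are indexed by a finite type 'c; the
  block (k-th simplex) a coordinate belongs to is given by blk :: 'c => 'k.
  Block k has N_k = card {c. blk c = k} coordinates.\<close>

definition block_size :: "('c::finite \<Rightarrow> 'k) \<Rightarrow> 'k \<Rightarrow> nat" where
  "block_size blk k = card {c. blk c = k}"

definition simplex_prod :: "('c::finite \<Rightarrow> 'k) \<Rightarrow> (real^'c) set" where
  "simplex_prod blk = {u. (\<forall>c. 0 \<le> u $ c) \<and> (\<forall>k. (\<Sum>c\<in>{c. blk c = k}. u $ c) = 1)}"

definition partial_at :: "(real^'c::finite \<Rightarrow> real) \<Rightarrow> real^'c \<Rightarrow> 'c \<Rightarrow> real" where
  "partial_at f u c = frechet_derivative f (at u) (axis c 1)"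

definition grad_vec :: "(real^'c::finite \<Rightarrow> real) \<Rightarrow> real^'c \<Rightarrow> real^'c" where
  "grad_vec f u = (\<chi> c. partial_at f u c)"

definition eg_weights :: "('c::finite \<Rightarrow> 'k) \<Rightarrow> ('k \<Rightarrow> real) \<Rightarrow> real^'c \<Rightarrow> real^'c" where
  "eg_weights blk \<eta> L = (\<chi> c. exp (- \<eta> (blk c) * L $ c) /
      (\<Sum>c'\<in>{c'. blk c' = blk c}. exp (- \<eta> (blk c) * L $ c')))"

definition uniform_init :: "('c::finite \<Rightarrow> 'k) \<Rightarrow> real^'c" where
  "uniform_init blk = (\<chi> c. 1 / real (block_size blk (blk c)))"

text \<open>Output at round n+1 given the cumulative gradient of rounds 1..n.\<close>
definition mweg_from :: "('c::finite \<Rightarrow> 'k) \<Rightarrow> ('k \<Rightarrow> real) \<Rightarrow> nat \<Rightarrow> real^'c \<Rightarrow> real^'c" where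
  "mweg_from blk \<eta> n L = (if n = 0 then uniform_init blk else eg_weights blk \<eta> L)"

primrec cum_grad :: "(nat \<Rightarrow> real^'c::finite \<Rightarrow> real) \<Rightarrow> ('c \<Rightarrow> 'k) \<Rightarrow> ('k \<Rightarrow> real) \<Rightarrow> nat \<Rightarrow> real^'c" where
  "cum_grad loss blk \<eta> 0 = 0"
| "cum_grad loss blk \<eta> (Suc n) = cum_grad loss blk \<eta> n
     + grad_vec (loss (Suc n)) (mweg_from blk \<eta> n (cum_grad loss blk \<eta> n))"

definition mweg :: "(nat \<Rightarrow> real^'c::finite \<Rightarrow> real) \<Rightarrow> ('c \<Rightarrow> 'k) \<Rightarrow> ('k \<Rightarrow> real) \<Rightarrow> nat \<Rightarrow> real^'c" where
  "mweg loss blk \<eta> t = mweg_from blk \<eta> (t - 1) (cum_grad loss blk \<eta> (t - 1))"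

end

theory Submission
  imports Defs "HOL-Probability.Hoeffding"
begin

text \<open>
  By convexity the regret against a fixed u is at most the linearised regret
  sum_t <grad l_t(u_t), u_t - u>, which splits into one sum per block. On block k the
  algorithm is the exponential-weights forecaster for the linear losses given by the k-th
  block of the gradients, which lie in [-G_k, G_k]. The usual potential argument, with
  Hoeffding's lemma bounding the one-step change of the log-partition function, bounds
  its regret by ln N_k / eta + eta T G_k^2 / 2, and the chosen eta balances the two terms
  to G_k sqrt (2 T ln N_k).
\<close>

lemma convex_on_has_derivative_le:
  fixes f :: "'a::real_normed_vector \<Rightarrow> real"
  assumes f: "convex_on S f" and x: "x \<in> S" and y: "y \<in> S"
    and D: "(f has_derivative D) (at x)"
  shows "D (y - x) \<le> f y - f x"
proof -
  define \<phi> where "\<phi> = (\<lambda>s::real. f (x + s *\<^sub>R (y - x)))"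
  have "((\<lambda>s::real. x + s *\<^sub>R (y - x)) has_derivative (\<lambda>s. s *\<^sub>R (y - x))) (at 0)"
    by (auto intro!: derivative_eq_intros)
  moreover have "(f has_derivative D) (at (x + 0 *\<^sub>R (y - x)))"
    using D by simp
  ultimately have "((f \<circ> (\<lambda>s. x + s *\<^sub>R (y - x))) has_derivative (D \<circ> (\<lambda>s. s *\<^sub>R (y - x)))) (at 0)"
    by (rule diff_chain_at)
  hence "(\<phi> has_derivative (\<lambda>s. D (s *\<^sub>R (y - x)))) (at 0)"
    by (simp add: \<phi>_def comp_def)
  moreover have "(\<lambda>s. D (s *\<^sub>R (y - x))) = (*) (D (y - x))"
    using has_derivative_linear[OF D] by (simp add: fun_eq_iff linear_scale)
  ultimately have "(\<phi> has_field_derivative D (y - x)) (at 0)"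
    by (simp add: has_field_derivative_def)
  hence quotient: "((\<lambda>s. (\<phi> s - \<phi> 0) / (s - 0)) \<longlongrightarrow> D (y - x)) (at_right 0)"
    by (simp add: has_field_derivative_iff filterlim_at_split)
  have "\<forall>\<^sub>F s in at_right 0. (\<phi> s - \<phi> 0) / (s - 0) \<le> f y - f x"
    using eventually_at_right_real[OF zero_less_one]
  proof eventually_elim
    case (elim s)
    have "\<phi> s = f ((1 - s) *\<^sub>R x + s *\<^sub>R y)"
      by (simp add: \<phi>_def algebra_simps)
    also have "\<dots> \<le> (1 - s) * f x + s * f y"
      using elim by (intro convex_onD[OF f] x y) auto
    finally show ?case
      using elim by (simp add: \<phi>_def divide_simps algebra_simps)
  qed
  with quotient show ?thesis
    by (intro tendsto_upperbound) auto
qed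

lemma frechet_derivative_eq_sum_partial_at:
  fixes f :: "real^'n::finite \<Rightarrow> real"
  assumes "f differentiable (at x)"
  shows "frechet_derivative f (at x) v = (\<Sum>i\<in>UNIV. partial_at f x i * v $ i)"
proof -
  have "linear (frechet_derivative f (at x))"
    using assms by (intro has_derivative_linear) (simp add: frechet_derivative_works)
  hence "frechet_derivative f (at x) (\<Sum>i\<in>UNIV. v $ i *s axis i 1) = (\<Sum>i\<in>UNIV. v $ i * partial_at f x i)"
    by (simp add: linear_sum linear_scale scalar_mult_eq_scaleR partial_at_def)
  thus ?thesis
    by (simp add: basis_expansion mult.commute)
qed

lemma convex_on_le_sum_partial_at:
  fixes f :: "real^'n::finite \<Rightarrow> real"
  assumes "convex_on S f" "x \<in> S" "y \<in> S" "f differentiable (at x)"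
  shows "f x - f y \<le> (\<Sum>i\<in>UNIV. partial_at f x i * (x $ i - y $ i))"
proof -
  have "frechet_derivative f (at x) (y - x) \<le> f y - f x"
    using assms by (intro convex_on_has_derivative_le) (simp_all add: frechet_derivative_works)
  thus ?thesis
    using assms(4) by (simp add: frechet_derivative_eq_sum_partial_at algebra_simps sum_subtractf)
qed

lemma Hoeffdings_lemma_finite:
  fixes C :: "'c set" and p x :: "'c \<Rightarrow> real" and a b l :: real
  assumes C: "finite C" and p_nonneg: "\<And>c. c \<in> C \<Longrightarrow> 0 \<le> p c" and p_sum: "(\<Sum>c\<in>C. p c) = 1"
    and x: "\<And>c. c \<in> C \<Longrightarrow> x c \<in> {a..b}" and l: "l > 0"
  shows "(\<Sum>c\<in>C. p c * exp (l * x c)) \<le> exp (l * (\<Sum>c\<in>C. p c * x c) + l\<^sup>2 * (b - a)\<^sup>2 / 8)"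
proof -
  define q where "q c = (if c \<in> C then p c else 0)" for c
  define P where "P = embed_pmf q"
  have q_nonneg: "0 \<le> q c" for c
    by (simp add: q_def p_nonneg)
  have "(\<integral>\<^sup>+c. ennreal (q c) \<partial>count_space UNIV) = (\<Sum>c\<in>C. ennreal (p c))"
    using C by (subst nn_integral_count_space'[of C]) (auto simp: q_def)
  also have "\<dots> = 1"
    using p_nonneg by (subst sum_ennreal) (simp_all add: p_sum)
  finally have pmf_P: "pmf P c = q c" and set_P: "set_pmf P \<subseteq> C" for c
    using q_nonneg by (auto simp: P_def pmf_embed_pmf set_embed_pmf q_def)
  interpret interval_bounded_random_variable "measure_pmf P" x a b
    by unfold_locales (use set_P x in \<open>auto simp: AE_measure_pmf_iff\<close>)
  define \<mu> where "\<mu> = (\<Sum>c\<in>C. p c * x c)"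
  have "measure_pmf.expectation P x = \<mu>"
    using set_P C by (subst integral_measure_pmf[of C]) (auto simp: pmf_P q_def \<mu>_def)
  moreover have "(\<integral>\<^sup>+c. ennreal (exp (l * (x c - \<mu>))) \<partial>measure_pmf P)
                   = ennreal (\<Sum>c\<in>C. p c * exp (l * (x c - \<mu>)))"
    using set_P C p_nonneg
    by (subst nn_integral_measure_pmf_support[of C])
       (auto simp: pmf_P q_def mult.commute ennreal_mult simp flip: sum_ennreal)
  ultimately have "(\<Sum>c\<in>C. p c * exp (l * (x c - \<mu>))) \<le> exp (l\<^sup>2 * (b - a)\<^sup>2 / 8)"
    using Hoeffdings_lemma_nn_integral[OF l] by simp
  moreover have "(\<Sum>c\<in>C. p c * exp (l * (x c - \<mu>))) = (\<Sum>c\<in>C. p c * exp (l * x c)) / exp (l * \<mu>)"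
    by (simp add: sum_divide_distrib right_diff_distrib exp_diff)
  ultimately show ?thesis
    by (simp add: exp_add \<mu>_def pos_divide_le_eq mult.commute)
qed

definition exp_weights :: "real \<Rightarrow> 'c set \<Rightarrow> ('c \<Rightarrow> real) \<Rightarrow> 'c \<Rightarrow> real" where
  "exp_weights \<eta> C L c = exp (- \<eta> * L c) / (\<Sum>c'\<in>C. exp (- \<eta> * L c'))"

lemma exp_weights_nonneg: "0 \<le> exp_weights \<eta> C L c"
  by (simp add: exp_weights_def sum_nonneg)

lemma sum_exp_weights:
  assumes "finite C" "C \<noteq> {}"
  shows "(\<Sum>c\<in>C. exp_weights \<eta> C L c) = 1"
proof -
  have "(\<Sum>c\<in>C. exp (- \<eta> * L c)) > 0"
    using assms by (intro sum_pos) auto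
  thus ?thesis
    by (simp add: exp_weights_def flip: sum_divide_distrib)
qed

lemma ln_sum_exp_update_le:
  fixes C :: "'c set" and L y :: "'c \<Rightarrow> real"
  assumes C: "finite C" "C \<noteq> {}" and \<eta>: "\<eta> > 0" and y: "\<And>c. c \<in> C \<Longrightarrow> \<bar>y c\<bar> \<le> G"
  shows "ln (\<Sum>c\<in>C. exp (- \<eta> * (L c + y c)))
           \<le> ln (\<Sum>c\<in>C. exp (- \<eta> * L c)) - \<eta> * (\<Sum>c\<in>C. exp_weights \<eta> C L c * y c) + \<eta>\<^sup>2 * G\<^sup>2 / 2"
proof -
  define W where "W = (\<Sum>c\<in>C. exp (- \<eta> * L c))"
  define p where "p = exp_weights \<eta> C L"
  have W: "W > 0"
    unfolding W_def using C by (intro sum_pos) auto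
  have "(\<Sum>c\<in>C. exp (- \<eta> * (L c + y c))) = W * (\<Sum>c\<in>C. p c * exp (\<eta> * - y c))"
    using W by (simp add: p_def exp_weights_def W_def sum_distrib_left distrib_left flip: exp_add)
  also have "\<dots> \<le> W * exp (\<eta> * (\<Sum>c\<in>C. p c * - y c) + \<eta>\<^sup>2 * (G - - G)\<^sup>2 / 8)"
    using W y C \<eta> unfolding p_def
    by (intro mult_left_mono Hoeffdings_lemma_finite exp_weights_nonneg sum_exp_weights) force+
  also have "\<dots> = W * exp (- \<eta> * (\<Sum>c\<in>C. p c * y c) + \<eta>\<^sup>2 * G\<^sup>2 / 2)"
    by (simp add: sum_negf power2_eq_square algebra_simps)
  finally have "ln (\<Sum>c\<in>C. exp (- \<eta> * (L c + y c))) \<le> ln (W * exp (- \<eta> * (\<Sum>c\<in>C. p c * y c) + \<eta>\<^sup>2 * G\<^sup>2 / 2))"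
    using C by (intro ln_mono sum_pos) auto
  thus ?thesis
    using W by (simp add: ln_mult W_def p_def)
qed

lemma sum_weighted_le_ln_sum_exp:
  fixes C :: "'c set" and u a :: "'c \<Rightarrow> real"
  assumes C: "finite C" and u: "\<And>c. c \<in> C \<Longrightarrow> 0 \<le> u c" "(\<Sum>c\<in>C. u c) = 1"
  shows "(\<Sum>c\<in>C. u c * a c) \<le> ln (\<Sum>c\<in>C. exp (a c))"
proof -
  have "a c \<le> ln (\<Sum>c\<in>C. exp (a c))" if "c \<in> C" for c
  proof -
    have "exp (a c) \<le> (\<Sum>c\<in>C. exp (a c))"
      using C that by (intro member_le_sum) auto
    thus ?thesis
      by (metis exp_gt_zero ln_exp ln_mono)
  qed
  hence "(\<Sum>c\<in>C. u c * a c) \<le> (\<Sum>c\<in>C. u c * ln (\<Sum>c\<in>C. exp (a c)))"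
    by (intro sum_mono mult_left_mono u)
  thus ?thesis
    by (simp add: u flip: sum_distrib_right)
qed

lemma exp_weights_regret:
  fixes C :: "'c set" and g :: "nat \<Rightarrow> 'c \<Rightarrow> real" and u :: "'c \<Rightarrow> real"
  assumes C: "finite C" "C \<noteq> {}" and \<eta>: "\<eta> > 0"
    and g: "\<And>t c. t \<in> {1..T} \<Longrightarrow> c \<in> C \<Longrightarrow> \<bar>g t c\<bar> \<le> G"
    and u: "\<And>c. c \<in> C \<Longrightarrow> 0 \<le> u c" "(\<Sum>c\<in>C. u c) = 1"
  shows "(\<Sum>t=1..T. \<Sum>c\<in>C. g t c * (exp_weights \<eta> C (\<lambda>c. \<Sum>s\<in>{1..<t}. g s c) c - u c))
           \<le> ln (real (card C)) / \<eta> + \<eta> * real T * G\<^sup>2 / 2"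
proof -
  define L where "L = (\<lambda>t c. \<Sum>s\<in>{1..<t}. g s c)"
  define \<Phi> where "\<Phi> t = ln (\<Sum>c\<in>C. exp (- \<eta> * L t c))" for t
  define p where "p t = exp_weights \<eta> C (L t)" for t
  have "\<Phi> (Suc t) - \<Phi> t \<le> - \<eta> * (\<Sum>c\<in>C. p t c * g t c) + \<eta>\<^sup>2 * G\<^sup>2 / 2" if "t \<in> {1..T}" for t
  proof -
    have "L (Suc t) c = L t c + g t c" for c
      using that by (simp add: L_def)
    thus ?thesis
      using ln_sum_exp_update_le[OF C \<eta>, of "g t" G "L t"] g[OF that]
      by (simp add: \<Phi>_def p_def)
  qed
  hence "(\<Sum>t=1..T. \<Phi> (Suc t) - \<Phi> t) \<le> (\<Sum>t=1..T. - \<eta> * (\<Sum>c\<in>C. p t c * g t c) + \<eta>\<^sup>2 * G\<^sup>2 / 2)"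
    by (rule sum_mono)
  moreover have "(\<Sum>t=1..T. \<Phi> (Suc t) - \<Phi> t) = \<Phi> (Suc T) - ln (real (card C))"
    by (subst sum_Suc_diff) (simp_all add: \<Phi>_def L_def)
  moreover have "(\<Sum>t=1..T. - \<eta> * (\<Sum>c\<in>C. p t c * g t c) + \<eta>\<^sup>2 * G\<^sup>2 / 2)
                   = - \<eta> * (\<Sum>t=1..T. \<Sum>c\<in>C. p t c * g t c) + T * (\<eta>\<^sup>2 * G\<^sup>2 / 2)"
    by (simp only: sum.distrib flip: sum_distrib_left) simp
  ultimately have potential:
    "\<Phi> (Suc T) \<le> ln (real (card C)) - \<eta> * (\<Sum>t=1..T. \<Sum>c\<in>C. p t c * g t c) + T * (\<eta>\<^sup>2 * G\<^sup>2 / 2)"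
    by linarith
  have "- \<eta> * (\<Sum>t=1..T. \<Sum>c\<in>C. u c * g t c) = (\<Sum>c\<in>C. u c * (- \<eta> * L (Suc T) c))"
    by (simp add: L_def sum_distrib_left sum.swap[of _ C] atLeastLessThanSuc_atLeastAtMost algebra_simps)
  also have "\<dots> \<le> \<Phi> (Suc T)"
    unfolding \<Phi>_def using C(1) u by (rule sum_weighted_le_ln_sum_exp)
  finally have "\<eta> * ((\<Sum>t=1..T. \<Sum>c\<in>C. p t c * g t c) - (\<Sum>t=1..T. \<Sum>c\<in>C. u c * g t c))
                  \<le> \<eta> * (ln (real (card C)) / \<eta> + \<eta> * real T * G\<^sup>2 / 2)"
    using potential \<eta> by (simp add: algebra_simps power2_eq_square)
  hence "(\<Sum>t=1..T. \<Sum>c\<in>C. p t c * g t c) - (\<Sum>t=1..T. \<Sum>c\<in>C. u c * g t c)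
                  \<le> ln (real (card C)) / \<eta> + \<eta> * real T * G\<^sup>2 / 2"
    using \<eta> by (simp only: mult_le_cancel_left_pos)
  thus ?thesis
    by (simp add: p_def L_def algebra_simps sum_subtractf)
qed

lemma tuned_learning_rate_bound:
  fixes a T G :: real
  assumes a: "a > 0" and T: "T > 0" and G: "G > 0"
  defines "\<eta> \<equiv> sqrt (2 * a / T) / G"
  shows "a / \<eta> + \<eta> * T * G\<^sup>2 / 2 = sqrt (2 * T) * (G * sqrt a)"
proof -
  define s where "s = sqrt (2 * a / T)"
  have s: "s > 0" "s\<^sup>2 = 2 * a / T"
    using a T by (simp_all add: s_def)
  have "(s * T)\<^sup>2 = 2 * T * a"
    unfolding power_mult_distrib s(2) using T by (simp add: field_simps power2_eq_square)
  hence root: "sqrt (2 * T) * sqrt a = s * T"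
    using s T by (metis real_sqrt_mult real_sqrt_unique less_imp_le mult_nonneg_nonneg)
  have "\<eta> = s / G"
    by (simp add: \<eta>_def s_def)
  hence "a / \<eta> + \<eta> * T * G\<^sup>2 / 2 = a / (s / G) + s / G * T * G\<^sup>2 / 2"
    by (simp only:)
  also have "\<dots> = G * (s * T)"
    using s T G by (simp add: field_simps power2_eq_square)
  finally show ?thesis
    using root by (simp add: ac_simps)
qed

lemma exp_weights_regret_tuned:
  fixes C :: "'c set" and g :: "nat \<Rightarrow> 'c \<Rightarrow> real" and u :: "'c \<Rightarrow> real"
  assumes C: "finite C" "C \<noteq> {}" and T: "T \<ge> 1" and G: "G > 0"
    and g: "\<And>t c. t \<in> {1..T} \<Longrightarrow> c \<in> C \<Longrightarrow> \<bar>g t c\<bar> \<le> G"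
    and u: "\<And>c. c \<in> C \<Longrightarrow> 0 \<le> u c" "(\<Sum>c\<in>C. u c) = 1"
  defines "\<eta> \<equiv> sqrt (2 * ln (real (card C)) / real T) / G"
  shows "(\<Sum>t=1..T. \<Sum>c\<in>C. g t c * (exp_weights \<eta> C (\<lambda>c. \<Sum>s\<in>{1..<t}. g s c) c - u c))
           \<le> sqrt (2 * real T) * (G * sqrt (ln (real (card C))))"
proof (cases "card C = 1")
  case True
  \<comment> \<open>Here the tuned rate is \<open>0\<close>, but the weights on a singleton are exact anyway.\<close>
  then obtain c0 where "C = {c0}"
    by (rule card_1_singletonE)
  with u(2) show ?thesis
    by (simp add: exp_weights_def)
next
  case False
  with C have "card C > 1"
    using card_eq_0_iff[of C] by linarith
  hence "ln (real (card C)) > 0"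
    by simp
  moreover have "real T > 0"
    using T by simp
  ultimately have \<eta>: "\<eta> > 0"
    using G by (simp add: \<eta>_def)
  have "ln (real (card C)) / \<eta> + \<eta> * real T * G\<^sup>2 / 2 = sqrt (2 * real T) * (G * sqrt (ln (real (card C))))"
    unfolding \<eta>_def using \<open>ln (real (card C)) > 0\<close> \<open>real T > 0\<close> G by (rule tuned_learning_rate_bound)
  moreover have "(\<Sum>t=1..T. \<Sum>c\<in>C. g t c * (exp_weights \<eta> C (\<lambda>c. \<Sum>s\<in>{1..<t}. g s c) c - u c))
                   \<le> ln (real (card C)) / \<eta> + \<eta> * real T * G\<^sup>2 / 2"
    by (rule exp_weights_regret[OF C \<eta> g u])
  ultimately show ?thesis
    by simp
qed

lemma cum_grad_nth:
  "cum_grad loss blk \<eta> n $ c = (\<Sum>s=1..n. partial_at (loss s) (mweg loss blk \<eta> s) c)"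
  by (induction n) (simp_all add: mweg_def grad_vec_def)

lemma mweg_nth:
  "mweg loss blk \<eta> t $ c = exp_weights (\<eta> (blk c)) {c'. blk c' = blk c}
      (\<lambda>c'. \<Sum>s\<in>{1..<t}. partial_at (loss s) (mweg loss blk \<eta> s) c') c"
proof (cases "t \<le> 1")
  case True
  then show ?thesis
    by (simp add: mweg_def mweg_from_def uniform_init_def block_size_def exp_weights_def)
next
  case False
  then have "{1..t - 1} = {1..<t}"
    by auto
  with False show ?thesis
    by (simp add: mweg_def mweg_from_def eg_weights_def exp_weights_def cum_grad_nth)
qed

lemma mweg_in_simplex_prod:
  assumes "surj blk"
  shows "mweg loss blk \<eta> t \<in> simplex_prod blk"
proof -
  define w where "w k = exp_weights (\<eta> k) {c'. blk c' = k}
            (\<lambda>c'. \<Sum>s\<in>{1..<t}. partial_at (loss s) (mweg loss blk \<eta> s) c')" for k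
  have mweg_w: "mweg loss blk \<eta> t $ c = w (blk c) c" for c
    unfolding w_def by (rule mweg_nth)
  have "{c. blk c = k} \<noteq> {}" for k
    using surjD[OF assms, of k] by auto
  hence "(\<Sum>c | blk c = k. w k c) = 1" for k
    unfolding w_def by (intro sum_exp_weights) simp_all
  moreover have "(\<Sum>c | blk c = k. mweg loss blk \<eta> t $ c) = (\<Sum>c | blk c = k. w k c)" for k
    by (intro sum.cong) (simp_all add: mweg_w)
  ultimately show ?thesis
    by (simp add: simplex_prod_def mweg_w w_def exp_weights_nonneg)
qed

lemma mweg_block_regret:
  fixes loss :: "nat \<Rightarrow> real^'c::finite \<Rightarrow> real" and blk :: "'c \<Rightarrow> 'k"
  assumes block: "{c. blk c = k} \<noteq> {}" and T: "T \<ge> 1" and G: "G > 0"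
    and u: "u \<in> simplex_prod blk"
    and \<eta>: "\<eta> k = sqrt (2 * ln (real (block_size blk k)) / real T) / G"
    and grad: "\<And>t c. t \<in> {1..T} \<Longrightarrow> blk c = k \<Longrightarrow>
                 \<bar>partial_at (loss t) (mweg loss blk \<eta> t) c\<bar> \<le> G"
  shows "(\<Sum>t=1..T. \<Sum>c | blk c = k.
            partial_at (loss t) (mweg loss blk \<eta> t) c * (mweg loss blk \<eta> t $ c - u $ c))
           \<le> sqrt (2 * real T) * (G * sqrt (ln (real (block_size blk k))))"
proof -
  define g where "g t c = partial_at (loss t) (mweg loss blk \<eta> t) c" for t c
  have "mweg loss blk \<eta> t $ c = exp_weights (\<eta> k) {c. blk c = k} (\<lambda>c'. \<Sum>s\<in>{1..<t}. g s c') c"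
    if "blk c = k" for t c
    using that by (simp add: g_def mweg_nth)
  hence "(\<Sum>t=1..T. \<Sum>c | blk c = k. g t c * (mweg loss blk \<eta> t $ c - u $ c))
           = (\<Sum>t=1..T. \<Sum>c | blk c = k. g t c *
                (exp_weights (\<eta> k) {c. blk c = k} (\<lambda>c'. \<Sum>s\<in>{1..<t}. g s c') c - u $ c))"
    by (intro sum.cong) auto
  also have "\<dots> \<le> sqrt (2 * real T) * (G * sqrt (ln (real (block_size blk k))))"
    unfolding \<eta> block_size_def
    by (rule exp_weights_regret_tuned)
       (use block T G grad u in \<open>auto simp: g_def simplex_prod_def\<close>)
  finally show ?thesis
    by (simp add: g_def)
qed

theorem theorem1:
  fixes loss :: "nat \<Rightarrow> real^'c::finite \<Rightarrow> real"
    and blk :: "'c \<Rightarrow> 'k::finite"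
    and G :: "'k \<Rightarrow> real"
    and T :: nat
  assumes blocks_nonempty: "surj blk"
    and T_pos: "T \<ge> 1"
    and diff: "\<And>t u. t \<ge> 1 \<Longrightarrow> u \<in> simplex_prod blk \<Longrightarrow> loss t differentiable (at u)"
    and conv: "\<And>t. t \<ge> 1 \<Longrightarrow> convex_on (simplex_prod blk) (loss t)"
    and G_pos: "\<And>k. G k > 0"
    and G_bound: "\<And>t u c. 1 \<le> t \<Longrightarrow> t \<le> T \<Longrightarrow> u \<in> simplex_prod blk \<Longrightarrow>
                    \<bar>partial_at (loss t) u c\<bar> \<le> G (blk c)"
  shows "\<forall>u \<in> simplex_prod blk.
           (\<Sum>t=1..T. loss t (mweg loss blk
               (\<lambda>k. sqrt (2 * ln (real (block_size blk k)) / real T) / G k) t))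
         - (\<Sum>t=1..T. loss t u)
         \<le> sqrt (2 * real T) * (\<Sum>k\<in>UNIV. G k * sqrt (ln (real (block_size blk k))))"
proof
  fix u assume u: "u \<in> simplex_prod blk"
  define \<eta> where "\<eta> k = sqrt (2 * ln (real (block_size blk k)) / real T) / G k" for k
  define U where "U = mweg loss blk \<eta>"
  define g where "g t c = partial_at (loss t) (U t) c" for t c
  have U: "U t \<in> simplex_prod blk" for t
    unfolding U_def using blocks_nonempty by (rule mweg_in_simplex_prod)
  have "(\<Sum>t=1..T. loss t (U t)) - (\<Sum>t=1..T. loss t u)
          \<le> (\<Sum>t=1..T. \<Sum>c\<in>UNIV. g t c * (U t $ c - u $ c))"
    unfolding sum_subtractf[symmetric] g_def
    by (intro sum_mono convex_on_le_sum_partial_at[OF conv U u diff] U) auto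
  also have "\<dots> = (\<Sum>k\<in>UNIV. \<Sum>t=1..T. \<Sum>c | blk c = k. g t c * (U t $ c - u $ c))"
    by (subst sum.swap) (simp add: sum.group[of UNIV UNIV blk, simplified])
  also have "\<dots> \<le> (\<Sum>k\<in>UNIV. sqrt (2 * real T) * (G k * sqrt (ln (real (block_size blk k)))))"
    unfolding g_def U_def
  proof (intro sum_mono mweg_block_regret)
    show "{c. blk c = k} \<noteq> {}" for k
      using surjD[OF blocks_nonempty, of k] by auto
    show "\<bar>partial_at (loss t) (mweg loss blk \<eta> t) c\<bar> \<le> G k" if "t \<in> {1..T}" "blk c = k" for t c k
      using G_bound[of t "U t" c] that U by (simp add: U_def)
  qed (use T_pos G_pos u \<eta>_def in auto)
  finally show "(\<Sum>t=1..T. loss t (mweg loss blk \<eta> t)) - (\<Sum>t=1..T. loss t u)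
                  \<le> sqrt (2 * real T) * (\<Sum>k\<in>UNIV. G k * sqrt (ln (real (block_size blk k))))"
    by (simp add: U_def sum_distrib_left)
qed

end
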